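(* Let $a, b \in \mathbb Z_g$ and let $1 \leq i < j \leq k$. If $\vec \theta \in \Lambda$, then \[ \theta_{\{i, j\}, a} + \theta_{\{i, j\}, b} \equiv \theta_{\{i, j\}, a + b} \pmod{2 \pi}, \] where the undefined value $\theta_{\{i,j\},0}$ is understood to be $0$.
   Context: Let $g\ge 2$, $k\ge 2$ be integers, $\mathbb Z_g$ the integers mod $g$, and $d=\binom{k}{2}(g-1)$. Index the coordinates of $\mathbb R^d$ by pairs $(\{i,j\},a)$ with $1\le i<j\le k$ and $a\in\mathbb Z_g\setminus\{0\}$. Define $Z:(\mathbb Z_g)^k\to\mathbb R^d$ by $[Z(\vec x)]_{\{i,j\},a}=1-1/g$ if $x_i-x_j=a$ and $-1/g$ otherwise. Define $\Phi:\mathbb R^d\to\mathbb C$ by $\Phi(\vec\theta)=\sum_{\vec x\in(\mathbb Z_g)^k} g^{-k}e^{i\vec\theta\cdot Z(\vec x)}$, and $\Lambda=\{\vec\theta\in\mathbb R^d: |\Phi(\vec\theta)|=1\}$. *)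

theory Defs
  imports "HOL-Analysis.Analysis" "HOL-Library.FuncSet"
begin

text \<open>Elements of Z_g are represented by integers in {0..<g}.
  Coordinates of R^d are triples (i, j, a) with 1 <= i < j <= k and a in Z_g minus 0;
  a vector of R^d is a function on these triples (values elsewhere are irrelevant).\<close>

definition coords :: "nat \<Rightarrow> nat \<Rightarrow> (nat \<times> nat \<times> int) set" where
  "coords g k = {(i, j, a). 1 \<le> i \<and> i < j \<and> j \<le> k \<and> a \<in> {1..<int g}}"

definition configs :: "nat \<Rightarrow> nat \<Rightarrow> (nat \<Rightarrow> int) set" where
  "configs g k = {1..k} \<rightarrow>\<^sub>E {0..<int g}"

definition Zvec :: "nat \<Rightarrow> (nat \<Rightarrow> int) \<Rightarrow> (nat \<times> nat \<times> int) \<Rightarrow> real" where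
  "Zvec g x = (\<lambda>(i, j, a). if (x i - x j) mod int g = a then 1 - 1 / real g else - 1 / real g)"

definition Phi :: "nat \<Rightarrow> nat \<Rightarrow> (nat \<times> nat \<times> int \<Rightarrow> real) \<Rightarrow> complex" where
  "Phi g k \<theta> = (\<Sum>x\<in>configs g k. (1 / of_nat g ^ k) *
      cis (\<Sum>p\<in>coords g k. \<theta> p * Zvec g x p))"

definition Lambda :: "nat \<Rightarrow> nat \<Rightarrow> (nat \<times> nat \<times> int \<Rightarrow> real) set" where
  "Lambda g k = {\<theta>. cmod (Phi g k \<theta>) = 1}"

definition theta_ext :: "nat \<Rightarrow> (nat \<times> nat \<times> int \<Rightarrow> real) \<Rightarrow> nat \<Rightarrow> nat \<Rightarrow> int \<Rightarrow> real" where
  "theta_ext g \<theta> i j a = (if a mod int g = 0 then 0 else \<theta> (i, j, a mod int g))"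

end

theory Submission
  imports Defs "HOL-Library.Real_Mod"
begin

text \<open>Since \<open>\<Phi>(\<theta>)\<close> is the average of the unit complex numbers \<open>e^{i \<theta>\<cdot>Z(x)}\<close>, the condition
  \<open>|\<Phi>(\<theta>)| = 1\<close> forces all phases \<open>\<theta>\<cdot>Z(x)\<close> to agree modulo \<open>2\<pi>\<close>. Take the four
  configurations with \<open>x\<^sub>i \<in> {a, 0}\<close>, \<open>x\<^sub>j \<in> {-b, 0}\<close> and all other entries \<open>0\<close>, and form
  the mixed second difference of their phases, which is then \<open>0\<close> modulo \<open>2\<pi>\<close>. A coordinate
  \<open>{l, m} \<noteq> {i, j}\<close> sees only \<open>x\<^sub>i\<close> or only \<open>x\<^sub>j\<close> and cancels, while the coordinate \<open>{i, j}\<close>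
  sees \<open>x\<^sub>i - x\<^sub>j \<in> {a, b, a + b, 0}\<close>, which leaves exactly
  \<open>\<theta>\<^sub>a + \<theta>\<^sub>b - \<theta>\<^sub>a\<^sub>+\<^sub>b\<close>.\<close>

lemma cis_eq_imp_diff_2pi:
  assumes "cis s = cis t"
  obtains m :: int where "s - t = 2 * pi * of_int m"
proof -
  have "cis (s - t) = 1" using assms by (simp add: cis_divide[symmetric])
  then obtain m :: int where "s - t = of_int m * (2 * pi)" by (auto simp: cis_eq_1_iff)
  then show thesis by (intro that[of m]) simp
qed

lemma eq_avg_if_norm_sum_eq_card:
  fixes z :: "'a \<Rightarrow> complex"
  assumes fin: "finite S" and unit: "\<forall>y\<in>S. cmod (z y) = 1"
    and norm_sum: "cmod (\<Sum>y\<in>S. z y) = card S" and x: "x \<in> S"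
  shows "z x = (\<Sum>y\<in>S. z y) / card S"
proof -
  define n where "n = card S"
  define s where "s = (\<Sum>y\<in>S. z y) / n"
  have n_pos: "n > 0" using fin x unfolding n_def by (auto simp: card_gt_0_iff)
  have "cmod s = 1" using norm_sum n_pos unfolding s_def n_def by (simp add: norm_divide)
  then have s_unit: "cnj s * s = 1" by (metis complex_norm_square mult.commute of_real_1 power_one)
  have Re_le: "Re (cnj s * z y) \<le> 1" if "y \<in> S" for y
    using complex_Re_le_cmod[of "cnj s * z y"] \<open>cmod s = 1\<close> unit that by (simp add: norm_mult)
  have "(\<Sum>y\<in>S. Re (cnj s * z y)) = Re (cnj s * (\<Sum>y\<in>S. z y))"
    by (simp only: sum_distrib_left Re_sum)
  also have "(\<Sum>y\<in>S. z y) = n * s" using n_pos by (simp add: s_def)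
  also have "Re (cnj s * (n * s)) = n" by (subst mult.left_commute) (simp add: s_unit)
  finally have "(\<Sum>y\<in>S. 1 - Re (cnj s * z y)) = 0"
    by (simp add: sum_subtractf n_def)
  then have Re_eq: "Re (cnj s * z x) = 1"
    using sum_nonneg_eq_0_iff[OF fin, of "\<lambda>y. 1 - Re (cnj s * z y)"] Re_le x by auto
  have "cmod (cnj s * z x) = 1" using \<open>cmod s = 1\<close> unit x by (simp add: norm_mult)
  then have "Im (cnj s * z x) = 0" using Re_eq cmod_power2[of "cnj s * z x"] by simp
  then have "cnj s * z x = 1" using Re_eq by (simp add: complex_eq_iff)
  then have "z x = (cnj s * s) * z x" using s_unit by simp
  also have "\<dots> = s" using \<open>cnj s * z x = 1\<close> by (simp add: mult.assoc mult.left_commute)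
  finally show ?thesis by (simp add: s_def n_def)
qed

definition phase :: "nat \<Rightarrow> nat \<Rightarrow> (nat \<times> nat \<times> int \<Rightarrow> real) \<Rightarrow> (nat \<Rightarrow> int) \<Rightarrow> real" where
  "phase g k \<theta> x = (\<Sum>p\<in>coords g k. \<theta> p * Zvec g x p)"

lemma finite_configs: "finite (configs g k)"
  unfolding configs_def by (auto intro!: finite_PiE)

lemma card_configs: "card (configs g k) = g ^ k"
  unfolding configs_def by (simp add: card_PiE)

lemma Lambda_phase_diff:
  assumes "g > 0" and "\<theta> \<in> Lambda g k" and "x \<in> configs g k" and "y \<in> configs g k"
  obtains m :: int where "phase g k \<theta> x - phase g k \<theta> y = 2 * pi * of_int m"
proof -
  let ?z = "\<lambda>x. cis (phase g k \<theta> x)"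
  have "Phi g k \<theta> = (\<Sum>x\<in>configs g k. ?z x) / of_nat (g ^ k)"
    unfolding Phi_def phase_def by (simp add: sum_divide_distrib)
  then have norm_sum: "cmod (\<Sum>x\<in>configs g k. ?z x) = card (configs g k)"
    using assms(1,2) by (simp add: Lambda_def card_configs norm_divide norm_power)
  have avg: "?z w = (\<Sum>x\<in>configs g k. ?z x) / card (configs g k)" if "w \<in> configs g k" for w
    by (rule eq_avg_if_norm_sum_eq_card[OF finite_configs _ norm_sum that]) simp
  have "?z x = ?z y" using avg[OF assms(3)] avg[OF assms(4)] by (rule trans[OF _ sym])
  then show thesis using cis_eq_imp_diff_2pi that by blast
qed

text \<open>The junk value outside \<open>{1..k}\<close> is needed because \<open>configs\<close> consists of
  extensional functions.\<close>

definition pair_config :: "nat \<Rightarrow> nat \<Rightarrow> nat \<Rightarrow> int \<Rightarrow> int \<Rightarrow> nat \<Rightarrow> int" where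
  "pair_config k i j u v =
     (\<lambda>l. if l \<in> {1..k} then (if l = i then u else if l = j then v else 0) else undefined)"

lemma pair_config_in_configs:
  assumes "u \<in> {0..<int g}" and "v \<in> {0..<int g}"
  shows "pair_config k i j u v \<in> configs g k"
  using assms unfolding pair_config_def configs_def by (auto simp: PiE_def extensional_def)

lemma pair_config_diff_indep:
  assumes "l < m" and "m \<le> k" and "i < j" and "(l, m) \<noteq> (i, j)"
  shows "(\<forall>u v v'. pair_config k i j u v l - pair_config k i j u v m
                  = pair_config k i j u v' l - pair_config k i j u v' m)
       \<or> (\<forall>u u' v. pair_config k i j u v l - pair_config k i j u v m
                  = pair_config k i j u' v l - pair_config k i j u' v m)"
  using assms unfolding pair_config_def by auto

lemma mixed_diff_eq_0:
  fixes h :: "int \<Rightarrow> int \<Rightarrow> 'a::ab_group_add"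
  assumes "(\<forall>u v v'. h u v = h u v') \<or> (\<forall>u u' v. h u v = h u' v)"
  shows "h u v' + h u' v - h u v - h u' v' = 0"
  using assms by (metis add_diff_cancel_left' diff_add_cancel diff_self)

lemma Zvec_pair_config_mixed_diff:
  fixes a b :: int
  assumes "g > 0" and "1 \<le> i" and "i < j" and "j \<le> k" and "p \<in> coords g k"
  defines "h \<equiv> \<lambda>u v. Zvec g (pair_config k i j u v) p"
  shows "h (a mod g) 0 + h 0 ((- b) mod g) - h (a mod g) ((- b) mod g) - h 0 0
    = of_bool (p = (i, j, a mod g)) + of_bool (p = (i, j, b mod g))
      - of_bool (p = (i, j, (a + b) mod g))"
proof -
  obtain l m c where p: "p = (l, m, c)" and lm: "1 \<le> l" "l < m" "m \<le> k" and c: "c \<in> {1..<int g}"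
    using assms(5) unfolding coords_def by auto
  have h: "h u v = (if (pair_config k i j u v l - pair_config k i j u v m) mod g = c
                    then 1 - 1 / real g else - 1 / real g)" for u v
    unfolding h_def p Zvec_def by simp
  show ?thesis
  proof (cases "(l, m) = (i, j)")
    case True
    then have "h u v = (if (u - v) mod g = c then 1 - 1 / real g else - 1 / real g)" for u v
      unfolding h pair_config_def using assms(3,4) lm by auto
    moreover have "(a mod g - (- b) mod g) mod g = (a + b) mod g" "(0 - (- b) mod g) mod g = b mod g"
      by (simp_all add: mod_diff_eq mod_minus_eq)
    ultimately show ?thesis using True c p by auto
  next
    case False
    then have "(\<forall>u v v'. h u v = h u v') \<or> (\<forall>u u' v. h u v = h u' v)"
      unfolding h using pair_config_diff_indep[OF lm(2,3) assms(3) False] by metis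
    then show ?thesis using False p by (auto simp: mixed_diff_eq_0)
  qed
qed

lemma finite_coords: "finite (coords g k)"
proof (rule finite_subset)
  show "coords g k \<subseteq> {1..k} \<times> {1..k} \<times> {1..<int g}" unfolding coords_def by auto
qed auto

lemma sum_coords_delta_theta_ext:
  assumes "g > 0" and "1 \<le> i" and "i < j" and "j \<le> k"
  shows "(\<Sum>p\<in>coords g k. \<theta> p * of_bool (p = (i, j, a mod g))) = theta_ext g \<theta> i j a"
proof -
  have "(\<Sum>p\<in>coords g k. \<theta> p * of_bool (p = (i, j, a mod g)))
      = (\<Sum>p\<in>coords g k. if p = (i, j, a mod g) then \<theta> (i, j, a mod g) else 0)"
    by (rule sum.cong) auto
  also have "\<dots> = (if (i, j, a mod g) \<in> coords g k then \<theta> (i, j, a mod g) else 0)"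
    by (rule sum.delta[OF finite_coords])
  also have "(i, j, a mod g) \<in> coords g k \<longleftrightarrow> a mod g \<noteq> 0"
  proof -
    have "0 \<le> a mod g" using assms(1) by simp
    then have "1 \<le> a mod g \<longleftrightarrow> a mod g \<noteq> 0" by linarith
    then show ?thesis using assms unfolding coords_def by auto
  qed
  finally show ?thesis unfolding theta_ext_def by simp
qed

lemma Lambda_theta_ext_add:
  fixes a b :: int
  assumes "g > 0" and "1 \<le> i" and "i < j" and "j \<le> k" and "\<theta> \<in> Lambda g k"
  obtains m :: int where
    "theta_ext g \<theta> i j a + theta_ext g \<theta> i j b - theta_ext g \<theta> i j (a + b) = 2 * pi * of_int m"
proof -
  define F where "F = (\<lambda>u v. phase g k \<theta> (pair_config k i j u v))"
  define a' b' where "a' = a mod g" and "b' = (- b) mod g"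
  have in_configs: "pair_config k i j u v \<in> configs g k" if "u \<in> {a', 0}" "v \<in> {b', 0}" for u v
    using that assms(1) unfolding a'_def b'_def by (auto intro: pair_config_in_configs)
  obtain m1 :: int where m1: "F a' 0 - F a' b' = 2 * pi * of_int m1"
    using Lambda_phase_diff[OF assms(1,5) in_configs in_configs] unfolding F_def by blast
  obtain m2 :: int where m2: "F 0 b' - F 0 0 = 2 * pi * of_int m2"
    using Lambda_phase_diff[OF assms(1,5) in_configs in_configs] unfolding F_def by blast
  let ?Z = "\<lambda>u v. Zvec g (pair_config k i j u v)"
  have "F a' 0 + F 0 b' - F a' b' - F 0 0
      = (\<Sum>p\<in>coords g k. \<theta> p * (?Z a' 0 p + ?Z 0 b' p - ?Z a' b' p - ?Z 0 0 p))"
    unfolding F_def phase_def by (simp only: distrib_left right_diff_distrib sum.distrib sum_subtractf)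
  also have "\<dots> = (\<Sum>p\<in>coords g k. \<theta> p * (of_bool (p = (i, j, a mod g))
      + of_bool (p = (i, j, b mod g)) - of_bool (p = (i, j, (a + b) mod g))))"
    unfolding a'_def b'_def by (rule sum.cong) (simp_all add: Zvec_pair_config_mixed_diff[OF assms(1-4)])
  also have "\<dots> = theta_ext g \<theta> i j a + theta_ext g \<theta> i j b - theta_ext g \<theta> i j (a + b)"
    by (simp only: distrib_left right_diff_distrib sum.distrib sum_subtractf
        sum_coords_delta_theta_ext[OF assms(1-4)])
  finally show thesis using m1 m2 by (intro that[of "m1 + m2"]) (simp add: algebra_simps)
qed

theorem corollary2p3:
  fixes g k i j :: nat and a b :: int and \<theta> :: "nat \<times> nat \<times> int \<Rightarrow> real"
  assumes "g \<ge> 2" and "k \<ge> 2"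
    and "a \<in> {0..<int g}" and "b \<in> {0..<int g}"
    and "1 \<le> i" and "i < j" and "j \<le> k"
    and "\<theta> \<in> Lambda g k"
  shows "\<exists>m::int. theta_ext g \<theta> i j a + theta_ext g \<theta> i j b - theta_ext g \<theta> i j (a + b)
           = 2 * pi * of_int m"
proof -
  have "g > 0" using assms(1) by simp
  then obtain m :: int where
    "theta_ext g \<theta> i j a + theta_ext g \<theta> i j b - theta_ext g \<theta> i j (a + b) = 2 * pi * of_int m"
    using Lambda_theta_ext_add assms(5-8) by blast
  then show ?thesis by blast
qed

end
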